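(* Assume $\Lambda\subset(0,\infty)$ and a family of disjoint intervals $I_k=(a_k,b_k)\subset(0,\infty)$, $0<a_1<b_1<\cdots$, $a_k\nearrow+\infty$, is substantial for some increasing function $\Psi(s)\nearrow\infty$. Then $\Lambda$ is a uniqueness set for $B_\sigma$ whenever $\sigma$ satisfies: (a) $\sigma(x)\le \frac{1}{2e}\Psi\bigl(\frac{x}{2e}\bigr)$ for all $x$; and (b) there exists a sequence of integers $n_j\to\infty$ such that $\frac{1}{\sigma(2b_{n_j})}\sum_{k=1}^{n_j}\Psi(b_k-a_k)\left(\frac{b_k-a_k}{b_k}\right)^2\to\infty$ as $j\to\infty$.
   Context: For a monotone function $\sigma$ on $(0,\infty)$ with $\sigma(y)\nearrow\infty$, the generalized Bernstein class is $B_\sigma=\{F$ entire$: |F(x+iy)|\le C_F e^{|y|\sigma(|y|)}, x+iy\in\mathbb{C}\}$, with $C_F>0$ a constant depending on $F$. A family of disjoint intervals $(a_k,b_k)$ is substantial for an increasing function $\Psi$ if $n_\Lambda(a_k,b_k)/(b_k-a_k)>\Psi(b_k-a_k)$ for all $k$ (where $n_\Lambda(I)$ is the number of points of $\Lambda$ in $I$) and $\sum_k((b_k-a_k)/b_k)^2=+\infty$. $\Lambda$ being a uniqueness set for $B_\sigma$ means that $F\in B_\sigma$ and $F|_\Lambda=0$ imply $F\equiv0$. *)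

theory Defs
  imports "HOL-Analysis.Analysis"
begin

definition bernstein_class :: "(real \<Rightarrow> real) \<Rightarrow> (complex \<Rightarrow> complex) set" where
  "bernstein_class \<sigma> = {F. F holomorphic_on UNIV \<and>
     (\<exists>C>0. \<forall>z. cmod (F z) \<le> C * exp (\<bar>Im z\<bar> * \<sigma> \<bar>Im z\<bar>))}"

definition uniqueness_set :: "real set \<Rightarrow> (real \<Rightarrow> real) \<Rightarrow> bool" where
  "uniqueness_set \<Lambda> \<sigma> \<longleftrightarrow>
     (\<forall>F \<in> bernstein_class \<sigma>. (\<forall>t\<in>\<Lambda>. F (complex_of_real t) = 0) \<longrightarrow> (\<forall>z. F z = 0))"

text \<open>An interval containing infinitely many points of Lambda has n_Lambda = infinity,
  so the density inequality holds trivially.\<close>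
definition substantial :: "real set \<Rightarrow> (nat \<Rightarrow> real) \<Rightarrow> (nat \<Rightarrow> real) \<Rightarrow> (real \<Rightarrow> real) \<Rightarrow> bool" where
  "substantial \<Lambda> a b \<Psi> \<longleftrightarrow>
     (\<forall>k\<ge>1. infinite (\<Lambda> \<inter> {a k<..<b k}) \<or>
             real (card (\<Lambda> \<inter> {a k<..<b k})) / (b k - a k) > \<Psi> (b k - a k)) \<and>
     filterlim (\<lambda>n. \<Sum>k=1..n. ((b k - a k) / b k)^2) at_top sequentially"

end

theory Submission
  imports Defs "HOL-Complex_Analysis.Complex_Analysis"
begin

(* Suppose F in B_sigma vanishes on Lambda but F (i y) is nonzero for some 0 < y <= a_1 / 2.
   Near the middle of an interval I_k = (a_k, b_k) of length l_k carrying more than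
   l_k Psi(l_k) zeros, a Jensen-type estimate together with condition (a) gives
   |F| <= C exp (-5/16 l_k Psi(l_k)).  For R = 2 b_n consider on the half-disc
   {|z| < R, Im z > eta} the harmonic function
     log C + 2 + sigma(R) Im z - sum_k w_k (theta_k(z) - theta_k'(z)),   w_k = l_k Psi(l_k) / 16,
   where theta_k(z) is the angle under which z sees the middle quarter of I_k and theta_k'(z)
   the same for its inversion in the circle |z| = R.  It dominates log |F| on the arc, where
   theta_k = theta_k', and on the low line Im z = eta, where the smallness of F near the I_k
   pays for the subtracted angles.  The maximum principle at i y then gives
     log |F (i y)| <= log C + 2 + y (sigma(2 b_n) - 1/256 sum_(k <= n) Psi(l_k) (l_k / b_k)^2),
   which tends to -infinity along the sequence of condition (b). *)

lemma quarter_far_of_disjoint: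
  fixes x :: real
  assumes "a < b" "a' < b'" "b \<le> a' \<or> b' \<le> a" "\<bar>x - (a' + b') / 2\<bar> < (b' - a') / 4"
  shows "(b - a) / 4 \<le> \<bar>x - (a + b) / 2\<bar>"
proof -
  have "x - (a' + b') / 2 < (b' - a') / 4" "(a' + b') / 2 - x < (b' - a') / 4"
    using assms(4) by linarith+
  with assms(1-3) have "(b - a) / 4 \<le> x - (a + b) / 2 \<or> (b - a) / 4 \<le> (a + b) / 2 - x"
    by argo
  then show ?thesis
    by linarith
qed

lemma eventually_at_right_0_mult_le:
  fixes c d :: real
  assumes "0 < d"
  shows "\<forall>\<^sub>F \<eta> in at_right 0. \<eta> * c \<le> d"
proof -
  have "((\<lambda>\<eta>. \<eta> * c) \<longlongrightarrow> 0 * c) (at_right 0)"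
    by (intro tendsto_intros)
  with assms have "\<forall>\<^sub>F \<eta> in at_right 0. \<eta> * c < d"
    using order_tendstoD(2) by simp
  then show ?thesis
    by (rule eventually_mono) simp
qed

lemma intervals_ordered:
  fixes a b :: "nat \<Rightarrow> real"
  assumes ab: "\<And>k. 1 \<le> k \<Longrightarrow> a k < b k" and ba: "\<And>k. 1 \<le> k \<Longrightarrow> b k < a (Suc k)"
    and "1 \<le> j" "j < k"
  shows "b j < a k"
proof -
  have "Suc j \<le> k"
    using \<open>j < k\<close> by simp
  then show ?thesis
  proof (induction k rule: dec_induct)
    case base
    show ?case
      using ba[OF \<open>1 \<le> j\<close>] .
  next
    case (step m)
    then show ?case
      using ab[of m] ba[of m] by simp
  qed
qed

lemma tendsto_zero_exp_diff:
  fixes s T :: "'a \<Rightarrow> real"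
  assumes s: "filterlim s at_top F" and ratio: "filterlim (\<lambda>x. 1 / s x * T x) at_top F"
    and "0 < y" "0 < c"
  shows "((\<lambda>x. A * exp (y * (s x - T x / c))) \<longlongrightarrow> 0) F"
proof (rule Lim_null_comparison)
  have "\<forall>\<^sub>F x in F. 1 \<le> s x \<and> 2 * c \<le> 1 / s x * T x"
    using s ratio by (auto simp: filterlim_at_top intro: eventually_conj)
  then show "\<forall>\<^sub>F x in F. norm (A * exp (y * (s x - T x / c))) \<le> \<bar>A\<bar> * exp (- y * s x)"
  proof (rule eventually_mono)
    fix x assume x: "1 \<le> s x \<and> 2 * c \<le> 1 / s x * T x"
    then have "0 < s x"
      by linarith
    with x have "2 * c * s x \<le> T x"
      by (simp add: pos_le_divide_eq)
    then have "s x - T x / c \<le> - s x"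
      using \<open>0 < c\<close> by (simp add: field_simps)
    from mult_left_mono[OF this, of y] \<open>0 < y\<close>
    have "exp (y * (s x - T x / c)) \<le> exp (- y * s x)"
      by simp
    then show "norm (A * exp (y * (s x - T x / c))) \<le> \<bar>A\<bar> * exp (- y * s x)"
      by (simp add: abs_mult mult_left_mono)
  qed
  have "filterlim (\<lambda>x. - y * s x) at_bot F"
    unfolding filterlim_uminus_at_bot using \<open>0 < y\<close>
    by (simp add: filterlim_tendsto_pos_mult_at_top[OF tendsto_const _ s])
  then show "((\<lambda>x. \<bar>A\<bar> * exp (- y * s x)) \<longlongrightarrow> 0) F"
    by (intro tendsto_mult_right_zero filterlim_compose[OF exp_at_bot])
qed

lemma filterlim_double_upper_endpoint:
  fixes a b :: "nat \<Rightarrow> real" and n :: "nat \<Rightarrow> nat" and \<sigma> :: "real \<Rightarrow> real"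
  assumes a_lim: "filterlim a at_top sequentially" and ab: "\<And>k. 1 \<le> k \<Longrightarrow> a k < b k"
    and n: "filterlim n at_top sequentially" and \<sigma>_lim: "filterlim \<sigma> at_top at_top"
  shows "filterlim (\<lambda>j. \<sigma> (2 * b (n j))) at_top sequentially"
proof -
  have "\<forall>\<^sub>F j in sequentially. 1 \<le> n j" "\<forall>\<^sub>F j in sequentially. 0 \<le> a (n j)"
    using n filterlim_compose[OF a_lim n] unfolding filterlim_at_top by blast+
  then have "\<forall>\<^sub>F j in sequentially. a (n j) \<le> 2 * b (n j)"
    by eventually_elim (use ab in force)
  then have "filterlim (\<lambda>j. 2 * b (n j)) at_top sequentially"
    by (rule filterlim_at_top_mono[OF filterlim_compose[OF a_lim n]])
  then show ?thesis
    by (rule filterlim_compose[OF \<sigma>_lim])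
qed

section \<open>Angles subtended by real segments\<close>

lemma Arg_le_Im_div_Re:
  assumes "0 < Re v" "0 \<le> Im v"
  shows "Arg v \<le> Im v / Re v"
  using abs_arctan_le[of "Im v / Re v"] assms by (simp add: arg_conv_arctan)

lemma Im_div_norm_le_Arg:
  assumes "0 \<le> Im v" "v \<noteq> 0"
  shows "Im v / norm v \<le> Arg v"
proof -
  have "Im v = norm v * sin (Arg v)"
    by (metis Im_rcis rcis_cmod_Arg)
  then have "Im v / norm v = sin (Arg v)"
    using assms by simp
  also have "\<dots> \<le> Arg v"
    using sin_x_le_x assms Arg_less_0 by blast
  finally show ?thesis .
qed

definition segment_log :: "real \<Rightarrow> real \<Rightarrow> complex \<Rightarrow> complex" where
  "segment_log p q z = Ln ((z - of_real q) / (z - of_real p))"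

(* For Im z > 0 the angle under which z sees the segment [p, q], i.e. pi times the harmonic
   measure of [p, q] in the upper half-plane. *)
definition segment_angle :: "real \<Rightarrow> real \<Rightarrow> complex \<Rightarrow> real" where
  "segment_angle p q z = Im (segment_log p q z)"

lemma Re_diff_mult_cnj_diff:
  "Re ((z - of_real q) * cnj (z - of_real p)) = (Re z - q) * (Re z - p) + (Im z)\<^sup>2"
  by (simp add: power2_eq_square)

lemma Im_diff_mult_cnj_diff:
  "Im ((z - of_real q) * cnj (z - of_real p)) = (q - p) * Im z"
  by (simp add: algebra_simps)

lemma segment_ratio_eq:
  "(z - of_real q) / (z - of_real p) =
     (z - of_real q) * cnj (z - of_real p) / of_real ((norm (z - of_real p))\<^sup>2)"
  by (subst complex_div_cnj) simp

lemma Im_segment_ratio_pos: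
  assumes "0 < Im z" "p < q"
  shows "0 < Im ((z - of_real q) / (z - of_real p))"
proof -
  have "z \<noteq> of_real p"
    using assms by auto
  then show ?thesis
    unfolding segment_ratio_eq Im_divide_of_real Im_diff_mult_cnj_diff using assms by simp
qed

lemma segment_ratio_notin_nonpos_Reals:
  assumes "0 < Im z" "p < q"
  shows "(z - of_real q) / (z - of_real p) \<notin> \<real>\<^sub>\<le>\<^sub>0"
  using Im_segment_ratio_pos[OF assms] by (auto simp: complex_nonpos_Reals_iff)

lemma holomorphic_on_segment_log:
  assumes "p < q"
  shows "segment_log p q holomorphic_on {z. 0 < Im z}"
proof -
  have "z - of_real p \<noteq> 0" if "0 < Im z" for z
    using that by auto
  then show ?thesis
    unfolding segment_log_def using segment_ratio_notin_nonpos_Reals assms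
    by (intro holomorphic_intros) auto
qed

lemma segment_angle_eq_Arg:
  assumes "0 < Im z" "p < q"
  shows "segment_angle p q z = Arg ((z - of_real q) * cnj (z - of_real p))"
proof -
  have "(z - of_real q) / (z - of_real p) \<noteq> 0"
    using assms by auto
  then have "segment_angle p q z = Arg ((z - of_real q) / (z - of_real p))"
    by (simp add: segment_angle_def segment_log_def Arg_eq_Im_Ln)
  also have "\<dots> = Arg ((z - of_real q) * cnj (z - of_real p))"
    unfolding segment_ratio_eq using assms by (intro Arg_divide_of_real) auto
  finally show ?thesis .
qed

lemma segment_angle_bounds:
  assumes "0 < Im z" "p < q"
  shows "0 \<le> segment_angle p q z" "segment_angle p q z \<le> pi"
proof -
  have "0 < Im ((z - of_real q) * cnj (z - of_real p))"
    unfolding Im_diff_mult_cnj_diff using assms by simp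
  then show "0 \<le> segment_angle p q z" "segment_angle p q z \<le> pi"
    unfolding segment_angle_eq_Arg[OF assms] using Arg_lt_pi by (metis less_eq_real_def)+
qed

lemma segment_angle_le:
  assumes "0 < Im z" "p < q" "0 < (Re z - q) * (Re z - p) + (Im z)\<^sup>2"
  shows "segment_angle p q z \<le> (q - p) * Im z / ((Re z - q) * (Re z - p) + (Im z)\<^sup>2)"
  using Arg_le_Im_div_Re[of "(z - of_real q) * cnj (z - of_real p)"] assms
  unfolding segment_angle_eq_Arg[OF assms(1,2)] Re_diff_mult_cnj_diff Im_diff_mult_cnj_diff
  by simp

lemma segment_angle_ge:
  assumes "0 < Im z" "p < q"
  shows "(q - p) * Im z / norm ((z - of_real q) * cnj (z - of_real p)) \<le> segment_angle p q z"
proof -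
  have "0 < Im ((z - of_real q) * cnj (z - of_real p))"
    unfolding Im_diff_mult_cnj_diff using assms by simp
  then have "(z - of_real q) * cnj (z - of_real p) \<noteq> 0"
    by (metis less_irrefl zero_complex.sel(2))
  then show ?thesis
    using Im_div_norm_le_Arg[of "(z - of_real q) * cnj (z - of_real p)"] assms
    unfolding segment_angle_eq_Arg[OF assms] Im_diff_mult_cnj_diff by simp
qed

lemma segment_angle_circle_inversion:
  assumes "0 < Im z" "0 < p" "p < q" "norm z = R"
  shows "segment_angle (R\<^sup>2 / q) (R\<^sup>2 / p) z = segment_angle p q z"
proof -
  have R: "0 < R"
    using assms by auto
  have zz: "z * cnj z = of_real (R\<^sup>2)"
    by (metis complex_norm_square assms(4))
  have "of_real (R\<^sup>2 / p) = z * cnj z / of_real p" "of_real (R\<^sup>2 / q) = z * cnj z / of_real q"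
    by (simp_all add: zz)
  then have e1: "z - of_real (R\<^sup>2 / p) = - (z / of_real p) * cnj (z - of_real p)"
    and e2: "cnj (z - of_real (R\<^sup>2 / q)) = - (cnj z / of_real q) * (z - of_real q)"
    using assms by (simp_all add: field_simps)
  have "(z - of_real (R\<^sup>2 / p)) * cnj (z - of_real (R\<^sup>2 / q)) =
      (z * cnj z / of_real (p * q)) * ((z - of_real q) * cnj (z - of_real p))"
    unfolding e1 e2 by (simp add: field_simps)
  also have "\<dots> = (z - of_real q) * cnj (z - of_real p) * of_real (R\<^sup>2 / (p * q))"
    unfolding zz by (simp add: field_simps)
  finally have eq: "(z - of_real (R\<^sup>2 / p)) * cnj (z - of_real (R\<^sup>2 / q)) =
      (z - of_real q) * cnj (z - of_real p) * of_real (R\<^sup>2 / (p * q))" .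
  have "R\<^sup>2 / q < R\<^sup>2 / p"
    using assms R by (simp add: divide_strict_left_mono)
  moreover have "Arg ((z - of_real (R\<^sup>2 / p)) * cnj (z - of_real (R\<^sup>2 / q))) =
      Arg ((z - of_real q) * cnj (z - of_real p))"
    unfolding eq using assms R by (intro Arg_times_of_real2) simp
  ultimately show ?thesis
    using assms by (simp only: segment_angle_eq_Arg)
qed

lemma segment_angle_on_imaginary_axis_ge:
  assumes p: "0 < p" "p < q" and y: "0 < y" "y \<le> q / 2"
  shows "(q - p) * y / (2 * q\<^sup>2) \<le> segment_angle p q (\<i> * of_real y)"
proof -
  define z where "z = \<i> * of_real y"
  have z: "Re z = 0" "Im z = y"
    by (simp_all add: z_def)
  define V where "V = (z - of_real q) * cnj (z - of_real p)"
  have "norm V \<le> \<bar>Re V\<bar> + \<bar>Im V\<bar>"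
    by (rule cmod_le)
  also have "\<dots> = p * q + y * y + (q - p) * y"
    unfolding V_def Re_diff_mult_cnj_diff Im_diff_mult_cnj_diff z using p y
    by (simp add: power2_eq_square)
  also have "\<dots> \<le> 2 * q\<^sup>2"
  proof -
    have "p * q \<le> q * q"
      using p by (intro mult_right_mono) auto
    moreover have "y * y \<le> (q / 2) * (q / 2)" "(q - p) * y \<le> q * (q / 2)"
      using p y by (intro mult_mono; simp)+
    ultimately show ?thesis
      using zero_le_square[of q] unfolding power2_eq_square by (simp, linarith)
  qed
  finally have "norm V \<le> 2 * q\<^sup>2" .
  moreover have "0 < Im V"
    unfolding V_def Im_diff_mult_cnj_diff z using p y by simp
  then have "0 < norm V"
    using abs_Im_le_cmod[of V] by linarith
  ultimately have "(q - p) * y / (2 * q\<^sup>2) \<le> (q - p) * y / norm V"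
    using p y by (intro divide_left_mono) auto
  also have "\<dots> \<le> segment_angle p q z"
    using segment_angle_ge[of z p q] z p y unfolding V_def by simp
  finally show ?thesis
    unfolding z_def .
qed

lemma segment_angle_on_imaginary_axis_le:
  assumes "0 < p" "p < q" "0 < y"
  shows "segment_angle p q (\<i> * of_real y) \<le> (q - p) * y / (q * p)"
proof -
  have "segment_angle p q (\<i> * of_real y) \<le> (q - p) * y / (q * p + y\<^sup>2)"
    using segment_angle_le[of "\<i> * of_real y" p q] assms by (simp add: add_pos_nonneg)
  also have "\<dots> \<le> (q - p) * y / (q * p)"
    using assms by (intro divide_left_mono) (auto intro!: mult_pos_pos add_pos_nonneg)
  finally show ?thesis .
qed

definition middle_quarter_lower :: "real \<Rightarrow> real \<Rightarrow> real" where
  "middle_quarter_lower a b = (a + b) / 2 - (b - a) / 8"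

definition middle_quarter_upper :: "real \<Rightarrow> real \<Rightarrow> real" where
  "middle_quarter_upper a b = (a + b) / 2 + (b - a) / 8"

lemma middle_quarter_bounds:
  assumes "a < b"
  shows "a < middle_quarter_lower a b" "middle_quarter_lower a b < middle_quarter_upper a b"
    "middle_quarter_upper a b < b" "middle_quarter_upper a b - middle_quarter_lower a b = (b - a) / 4"
  using assms by (simp_all add: middle_quarter_lower_def middle_quarter_upper_def field_simps)

definition middle_quarter_angle :: "real \<Rightarrow> real \<Rightarrow> complex \<Rightarrow> real" where
  "middle_quarter_angle a b = segment_angle (middle_quarter_lower a b) (middle_quarter_upper a b)"

lemma middle_quarter_angle_bounds:
  assumes "0 < Im z" "a < b"
  shows "0 \<le> middle_quarter_angle a b z" "middle_quarter_angle a b z \<le> pi"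
  unfolding middle_quarter_angle_def
  using segment_angle_bounds[OF assms(1) middle_quarter_bounds(2)[OF assms(2)]] by auto

lemma middle_quarter_angle_le_far:
  assumes ab: "a < b" and z: "0 < Im z" and far: "(b - a) / 4 \<le> \<bar>Re z - (a + b) / 2\<bar>"
  shows "middle_quarter_angle a b z \<le> 16 * Im z / (b - a)"
proof -
  define l p q where "l = b - a" and "p = middle_quarter_lower a b"
    and "q = middle_quarter_upper a b"
  have l: "0 < l" and pq: "p < q" and qp: "q - p = l / 4"
    using ab middle_quarter_bounds[OF ab] unfolding l_def p_def q_def by simp_all
  have "l / 8 * (l / 8) \<le> (Re z - q) * (Re z - p)"
  proof (cases "(a + b) / 2 \<le> Re z")
    case True
    then have "l / 8 \<le> Re z - q" "l / 8 \<le> Re z - p"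
      using far ab unfolding l_def p_def q_def middle_quarter_lower_def middle_quarter_upper_def
      by argo+
    then show ?thesis
      using l by (intro mult_mono) auto
  next
    case False
    then have "l / 8 \<le> q - Re z" "l / 8 \<le> p - Re z"
      using far ab unfolding l_def p_def q_def middle_quarter_lower_def middle_quarter_upper_def
      by argo+
    then have "l / 8 * (l / 8) \<le> (q - Re z) * (p - Re z)"
      using l by (intro mult_mono) auto
    then show ?thesis
      by (simp add: algebra_simps)
  qed
  then have den: "l * l / 64 \<le> (Re z - q) * (Re z - p) + (Im z)\<^sup>2"
    using zero_le_power2[of "Im z"] by linarith
  have "0 < l * l / 64"
    using l by simp
  then have "segment_angle p q z \<le> (q - p) * Im z / ((Re z - q) * (Re z - p) + (Im z)\<^sup>2)"
    using den z pq by (intro segment_angle_le) auto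
  also have "\<dots> \<le> (q - p) * Im z / (l * l / 64)"
    using den \<open>0 < l * l / 64\<close> pq z by (intro divide_left_mono) auto
  also have "\<dots> = 16 * Im z / l"
    unfolding qp using l by (simp add: field_simps)
  finally show ?thesis
    unfolding middle_quarter_angle_def p_def q_def l_def .
qed

(* The inversion z \<mapsto> R^2 / cnj z in the circle |z| = R maps the middle quarter [p, q] of
   (a, b) to [R^2 / q, R^2 / p]. *)
definition inverted_quarter_angle :: "real \<Rightarrow> real \<Rightarrow> real \<Rightarrow> complex \<Rightarrow> real" where
  "inverted_quarter_angle R a b =
     segment_angle (R\<^sup>2 / middle_quarter_upper a b) (R\<^sup>2 / middle_quarter_lower a b)"

lemma inverted_quarter_angle_nonneg:
  assumes "0 < Im z" "0 < a" "a < b" "0 < R"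
  shows "0 \<le> inverted_quarter_angle R a b z"
proof -
  have "R\<^sup>2 / middle_quarter_upper a b < R\<^sup>2 / middle_quarter_lower a b"
    using middle_quarter_bounds[OF assms(3)] assms by (simp add: divide_strict_left_mono)
  then show ?thesis
    unfolding inverted_quarter_angle_def using segment_angle_bounds(1) assms(1) by blast
qed

lemma inverted_quarter_angle_on_circle:
  assumes "0 < Im z" "0 < a" "a < b" "norm z = R"
  shows "inverted_quarter_angle R a b z = middle_quarter_angle a b z"
  unfolding inverted_quarter_angle_def middle_quarter_angle_def
  using middle_quarter_bounds[OF assms(3)] assms
  by (intro segment_angle_circle_inversion) auto

lemma middle_quarter_angle_gain:
  assumes ab: "0 < a" "a < b" and y: "0 < y" "y \<le> a / 2" and R: "2 * b \<le> R"
  shows "(b - a) * y / (16 * b\<^sup>2) \<le>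
    middle_quarter_angle a b (\<i> * of_real y) - inverted_quarter_angle R a b (\<i> * of_real y)"
proof -
  define p q where "p = middle_quarter_lower a b" and "q = middle_quarter_upper a b"
  have pq: "a < p" "p < q" "q < b" "q - p = (b - a) / 4"
    using middle_quarter_bounds[OF ab(2)] by (simp_all add: p_def q_def)
  have R0: "0 < R"
    using R ab by simp
  have "q\<^sup>2 \<le> b\<^sup>2"
    using ab pq by (intro power_mono) auto
  then have "(b - a) * y / (16 * b\<^sup>2) \<le> (b - a) * y / (16 * q\<^sup>2)"
    using ab pq y by (intro divide_left_mono) auto
  also have "\<dots> = (q - p) * y / (2 * q\<^sup>2) - (q - p) * y / (4 * q\<^sup>2)"
    unfolding pq(4) by (simp add: field_simps)
  finally have "(b - a) * y / (16 * b\<^sup>2) \<le> (q - p) * y / (2 * q\<^sup>2) - (q - p) * y / (4 * q\<^sup>2)" .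
  moreover have "(2 * q)\<^sup>2 \<le> R\<^sup>2"
    using R ab pq by (intro power_mono) auto
  then have "(q - p) * y / R\<^sup>2 \<le> (q - p) * y / (4 * q\<^sup>2)"
    using ab pq y R0 by (intro divide_left_mono) (auto simp: power_mult_distrib)
  moreover have "(q - p) * y / (2 * q\<^sup>2) \<le> segment_angle p q (\<i> * of_real y)"
    using ab pq y by (intro segment_angle_on_imaginary_axis_ge) auto
  moreover have "segment_angle (R\<^sup>2 / q) (R\<^sup>2 / p) (\<i> * of_real y) \<le> (q - p) * y / R\<^sup>2"
  proof -
    have "R\<^sup>2 / q < R\<^sup>2 / p"
      using ab pq R0 by (simp add: divide_strict_left_mono)
    then have "segment_angle (R\<^sup>2 / q) (R\<^sup>2 / p) (\<i> * of_real y) \<le>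
        (R\<^sup>2 / p - R\<^sup>2 / q) * y / (R\<^sup>2 / p * (R\<^sup>2 / q))"
      using ab pq R0 y by (intro segment_angle_on_imaginary_axis_le) auto
    also have "\<dots> = (q - p) * y / R\<^sup>2"
      using ab pq R0 by (simp add: field_simps power2_eq_square)
    finally show ?thesis .
  qed
  ultimately show ?thesis
    unfolding middle_quarter_angle_def inverted_quarter_angle_def p_def q_def by linarith
qed

section \<open>Zeros and the maximum principle\<close>

lemma entire_factor_finite_zeros:
  assumes "finite Z" "F holomorphic_on UNIV" "\<And>l. l \<in> Z \<Longrightarrow> F l = 0"
  shows "\<exists>Q. Q holomorphic_on UNIV \<and> (\<forall>w. F w = Q w * (\<Prod>l\<in>Z. w - l))"
  using assms
proof (induction Z arbitrary: F rule: finite_induct)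
  case empty
  then show ?case
    by auto
next
  case (insert l Z)
  define F' where "F' w = (if w = l then deriv F l else (F w - F l) / (w - l))" for w
  have "F' holomorphic_on UNIV"
    unfolding F'_def by (rule pole_lemma_open) (use insert in auto)
  moreover have Fl: "F l = 0"
    using insert by auto
  then have "\<And>m. m \<in> Z \<Longrightarrow> F' m = 0"
    using insert unfolding F'_def by auto
  ultimately obtain Q where Q: "Q holomorphic_on UNIV" "\<forall>w. F' w = Q w * (\<Prod>m\<in>Z. w - m)"
    using insert.IH by blast
  have "F w = Q w * (\<Prod>m\<in>insert l Z. w - m)" for w
  proof (cases "w = l")
    case False
    then have "F w = (w - l) * F' w"
      using Fl unfolding F'_def by simp
    then show ?thesis
      using Q(2) insert by simp
  qed (use Fl insert.hyps in simp)
  with Q(1) show ?case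
    by blast
qed

lemma power_card_le_prod_norm_diff:
  fixes z w :: "'a::real_normed_vector"
  assumes "\<And>l. l \<in> Z \<Longrightarrow> norm (l - z) \<le> d" "d \<le> r" "norm (w - z) = r"
  shows "(r - d) ^ card Z \<le> (\<Prod>l\<in>Z. norm (w - l))"
proof -
  have "(r - d) ^ card Z = (\<Prod>l\<in>Z. r - d)"
    by simp
  also have "\<dots> \<le> (\<Prod>l\<in>Z. norm (w - l))"
  proof (rule prod_mono)
    fix l assume "l \<in> Z"
    moreover have "norm (w - z) \<le> norm (w - l) + norm (l - z)"
      using norm_triangle_ineq[of "w - l" "l - z"] by simp
    ultimately show "0 \<le> r - d \<and> r - d \<le> norm (w - l)"
      using assms(1)[of l] assms(2,3) by linarith
  qed
  finally show ?thesis .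
qed

lemma norm_le_by_zeros_in_disc:
  assumes F: "F holomorphic_on UNIV" and Z: "finite Z" "\<And>l. l \<in> Z \<Longrightarrow> F l = 0"
    and close: "\<And>l. l \<in> Z \<Longrightarrow> norm (l - z) \<le> d" and d: "0 < d" "d < r"
    and M: "\<And>w. norm (w - z) = r \<Longrightarrow> norm (F w) \<le> M"
  shows "norm (F z) \<le> M * (d / (r - d)) ^ card Z"
proof -
  obtain Q where Q: "Q holomorphic_on UNIV" "\<forall>w. F w = Q w * (\<Prod>l\<in>Z. w - l)"
    using entire_factor_finite_zeros[OF Z(1) F Z(2)] by blast
  have "norm (F (z + of_real r)) \<le> M"
    using M[of "z + of_real r"] d by simp
  then have M0: "0 \<le> M"
    using norm_ge_zero order_trans by blast
  have Q_frontier: "norm (Q w) \<le> M / (r - d) ^ card Z" if "w \<in> frontier (ball z r)" for w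
  proof -
    have wr: "norm (w - z) = r"
      using that d by (simp add: dist_norm norm_minus_commute)
    have "(r - d) ^ card Z \<le> (\<Prod>l\<in>Z. norm (w - l))"
      using close d wr by (intro power_card_le_prod_norm_diff) auto
    then have "norm (Q w) * (r - d) ^ card Z \<le> norm (Q w) * (\<Prod>l\<in>Z. norm (w - l))"
      by (simp add: mult_left_mono)
    also have "\<dots> = norm (F w)"
      using Q(2) by (simp add: norm_mult prod_norm)
    also have "\<dots> \<le> M"
      using M wr by blast
    finally show ?thesis
      using d by (simp add: pos_le_divide_eq)
  qed
  have Qz: "norm (Q z) \<le> M / (r - d) ^ card Z"
  proof (rule maximum_modulus_frontier[of Q "ball z r"])
    show "Q holomorphic_on interior (ball z r)"
      using Q(1) by (rule holomorphic_on_subset) simp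
    show "continuous_on (closure (ball z r)) Q"
      using holomorphic_on_imp_continuous_on[OF Q(1)] continuous_on_subset by blast
  qed (use d Q_frontier in simp_all)
  have "(\<Prod>l\<in>Z. norm (z - l)) \<le> (\<Prod>l\<in>Z. d)"
    by (rule prod_mono) (use close in \<open>auto simp: norm_minus_commute\<close>)
  then have P: "(\<Prod>l\<in>Z. norm (z - l)) \<le> d ^ card Z"
    by simp
  have "norm (F z) = norm (Q z) * (\<Prod>l\<in>Z. norm (z - l))"
    using Q(2) by (simp add: norm_mult prod_norm)
  also have "\<dots> \<le> (M / (r - d) ^ card Z) * d ^ card Z"
    using M0 d by (intro mult_mono[OF Qz P]) (auto simp: prod_nonneg)
  also have "\<dots> = M * (d / (r - d)) ^ card Z"
    by (simp add: power_divide)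
  finally show ?thesis .
qed

lemma entire_zeros_finite_if_bounded:
  assumes F: "F holomorphic_on UNIV" and "F \<xi> \<noteq> 0" and "bounded T" and "\<And>t. t \<in> T \<Longrightarrow> F t = 0"
  shows "finite T"
proof (rule ccontr)
  assume "infinite T"
  then obtain w where "w islimpt T"
    using bounded_infinite_imp_islimpt[OF order_refl \<open>bounded T\<close>] by blast
  then have "F \<xi> = 0"
    by (rule analytic_continuation[OF F open_UNIV connected_UNIV subset_UNIV UNIV_I _ assms(4) UNIV_I])
  with \<open>F \<xi> \<noteq> 0\<close> show False ..
qed

lemma norm_le_exp_Re_frontier:
  assumes "F holomorphic_on U" "H holomorphic_on U" "open U" "closure S \<subseteq> U" "bounded S"
    and "\<And>z. z \<in> frontier S \<Longrightarrow> norm (F z) \<le> exp (Re (H z))" and "\<xi> \<in> S"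
  shows "norm (F \<xi>) \<le> exp (Re (H \<xi>))"
proof -
  define G where "G z = F z * exp (- H z)" for z
  have G: "G holomorphic_on U"
    unfolding G_def using assms by (intro holomorphic_intros)
  have normG: "norm (G z) = norm (F z) / exp (Re (H z))" for z
    unfolding G_def norm_mult norm_exp_eq_Re by (simp add: exp_minus divide_inverse)
  have "norm (G \<xi>) \<le> 1"
  proof (rule maximum_modulus_frontier[of G S])
    show "G holomorphic_on interior S"
      using G assms(4) interior_subset closure_subset by (blast intro: holomorphic_on_subset)
    show "continuous_on (closure S) G"
      using holomorphic_on_imp_continuous_on[OF G] assms(4) continuous_on_subset by blast
  qed (use assms normG in auto)
  then show ?thesis
    by (simp add: normG)
qed

lemma frontier_ball_Int_Im_gt_subset:
  "frontier (ball 0 R \<inter> {z. \<eta> < Im z}) \<subseteq> {z. norm z = R \<and> \<eta> \<le> Im z} \<union> {z. Im z = \<eta>}"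
proof
  define S where "S = ball 0 R \<inter> {z. \<eta> < Im z}"
  fix z assume "z \<in> frontier (ball 0 R \<inter> {z. \<eta> < Im z})"
  moreover have "open S"
    unfolding S_def by (intro open_Int open_ball open_halfspace_Im_gt)
  ultimately have "z \<in> closure S" "z \<notin> S"
    unfolding S_def[symmetric] frontier_def interior_open[OF \<open>open S\<close>] by auto
  moreover have "closure S \<subseteq> cball 0 R \<inter> {z. \<eta> \<le> Im z}"
    unfolding S_def by (intro closure_minimal) (auto intro: closed_Int closed_halfspace_Im_ge)
  ultimately show "z \<in> {z. norm z = R \<and> \<eta> \<le> Im z} \<union> {z. Im z = \<eta>}"
    unfolding S_def by auto
qed

lemma entire_nonzero_on_imaginary_segment:
  assumes F: "F holomorphic_on UNIV" and "F \<xi> \<noteq> 0" and "0 < c"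
  obtains y where "0 < y" "y \<le> c" "F (\<i> * of_real y) \<noteq> 0"
proof -
  define T where "T = (\<lambda>y. \<i> * complex_of_real y) ` {0<..c}"
  have "inj_on (\<lambda>y. \<i> * complex_of_real y) {0<..c}"
    by (simp add: inj_on_def)
  then have "infinite T"
    using infinite_Ioc[OF \<open>0 < c\<close>] finite_imageD unfolding T_def by blast
  moreover have "T \<subseteq> cball 0 c"
    unfolding T_def by (auto simp: norm_mult)
  then have "bounded T"
    using bounded_cball bounded_subset by blast
  ultimately have "\<exists>w\<in>T. F w \<noteq> 0"
    using entire_zeros_finite_if_bounded[OF F \<open>F \<xi> \<noteq> 0\<close>] by blast
  with that show thesis
    unfolding T_def by auto
qed

lemma norm_of_real_diff_le_near_middle:
  assumes t: "a < t" "t < b"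
    and x: "\<bar>Re z - (a + b) / 2\<bar> \<le> (b - a) / 4" and y: "\<bar>Im z\<bar> \<le> (b - a) / 8"
  shows "norm (of_real t - z) \<le> 7 * (b - a) / 8"
proof -
  have "Re z - (a + b) / 2 \<le> (b - a) / 4" "(a + b) / 2 - Re z \<le> (b - a) / 4"
    using x by linarith+
  then have "\<bar>t - Re z\<bar> \<le> 3 * (b - a) / 4"
    using t by (intro abs_leI) argo+
  moreover have "norm (of_real t - z) \<le> \<bar>t - Re z\<bar> + \<bar>Im z\<bar>"
    using cmod_le[of "of_real t - z"] by simp
  ultimately show ?thesis
    using y by linarith
qed

locale vanishing_bernstein_function =
  fixes F :: "complex \<Rightarrow> complex" and C :: real and \<sigma> \<Psi> :: "real \<Rightarrow> real" and \<Lambda> :: "real set"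
  assumes holomorphic: "F holomorphic_on UNIV"
    and C_pos: "0 < C"
    and growth: "\<And>w. norm (F w) \<le> C * exp (\<bar>Im w\<bar> * \<sigma> \<bar>Im w\<bar>)"
    and \<sigma>_mono: "mono_on {0<..} \<sigma>"
    and \<Psi>_mono: "mono_on {0<..} \<Psi>"
    and \<sigma>_le_\<Psi>: "\<And>x. 0 < x \<Longrightarrow> \<sigma> x \<le> 1 / (2 * exp 1) * \<Psi> (x / (2 * exp 1))"
    and vanishes: "\<And>t. t \<in> \<Lambda> \<Longrightarrow> F (of_real t) = 0"
begin

lemma norm_le_exp_abs_Im:
  assumes "\<bar>Im z\<bar> \<le> s" "0 < s"
  shows "norm (F z) \<le> C * exp (\<bar>Im z\<bar> * max 0 (\<sigma> s))"
proof -
  have "\<bar>Im z\<bar> * \<sigma> \<bar>Im z\<bar> \<le> \<bar>Im z\<bar> * max 0 (\<sigma> s)"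
  proof (cases "Im z = 0")
    case False
    then have "\<sigma> \<bar>Im z\<bar> \<le> \<sigma> s"
      using assms by (intro mono_onD[OF \<sigma>_mono]) auto
    then show ?thesis
      by (intro mult_left_mono) auto
  qed simp
  then have "C * exp (\<bar>Im z\<bar> * \<sigma> \<bar>Im z\<bar>) \<le> C * exp (\<bar>Im z\<bar> * max 0 (\<sigma> s))"
    using C_pos by simp
  with growth[of z] show ?thesis
    by (rule order_trans)
qed

lemma finite_zeros_in_interval:
  assumes "F \<xi> \<noteq> 0"
  shows "finite (\<Lambda> \<inter> {s<..<t})"
proof -
  have "finite (complex_of_real ` (\<Lambda> \<inter> {s<..<t}))"
  proof (rule entire_zeros_finite_if_bounded[OF holomorphic assms])
    have "complex_of_real ` (\<Lambda> \<inter> {s<..<t}) \<subseteq> cball 0 (\<bar>s\<bar> + \<bar>t\<bar>)"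
      by auto
    then show "bounded (complex_of_real ` (\<Lambda> \<inter> {s<..<t}))"
      using bounded_cball bounded_subset by blast
  qed (use vanishes in auto)
  then show ?thesis
    by (rule finite_imageD) (simp add: inj_on_def)
qed

lemma norm_le_in_strip:
  assumes l: "0 < l" and P: "0 < \<Psi> l"
    and Im_w: "\<bar>Im w\<bar> \<le> l / 8 + (1 + exp 1) * (7 * l / 8)"
  shows "norm (F w) \<le> C * exp (11/16 * (l * \<Psi> l))"
proof -
  define e s where "e = exp (1::real)" and "s = l / 8 + (1 + e) * (7 * l / 8)"
  have e2: "2 \<le> e"
    using exp_ge_add_one_self[of 1] by (simp add: e_def)
  have s: "0 < s" "s / (2 * e) \<le> l" "s / (2 * e) \<le> (11/16) * l"
    using l e2 by (simp_all add: s_def field_simps add_pos_pos)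
  have "\<sigma> s \<le> 1 / (2 * e) * \<Psi> (s / (2 * e))"
    using \<sigma>_le_\<Psi>[OF s(1)] by (simp add: e_def)
  also have "\<dots> \<le> \<Psi> l / (2 * e)"
  proof -
    have "\<Psi> (s / (2 * e)) \<le> \<Psi> l"
      using s e2 l by (intro mono_onD[OF \<Psi>_mono]) auto
    then show ?thesis
      using e2 by (simp add: divide_right_mono)
  qed
  finally have "\<bar>Im w\<bar> * max 0 (\<sigma> s) \<le> s * (\<Psi> l / (2 * e))"
    using Im_w P e2 unfolding s_def e_def by (intro mult_mono) auto
  also have "\<dots> = s / (2 * e) * \<Psi> l"
    by simp
  also have "\<dots> \<le> 11/16 * (l * \<Psi> l)"
    using mult_right_mono[OF s(3), of "\<Psi> l"] P by simp
  finally show ?thesis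
    using norm_le_exp_abs_Im[of w s] Im_w s C_pos unfolding s_def e_def
    by (meson exp_le_cancel_iff mult_le_cancel_left_pos order_trans)
qed

(* A Jensen-type estimate: the more than l Psi(l) zeros in the interval of length l lie within
   d = 7 l / 8 of z, the circle of radius (1 + e) d around z stays in the strip of
   norm_le_in_strip, and every zero gains a factor 1 / e; finally 11/16 - 1 = -5/16. *)
lemma norm_small_near_dense_zeros:
  assumes ab: "a < b" and fin: "finite (\<Lambda> \<inter> {a<..<b})"
    and card: "(b - a) * \<Psi> (b - a) < card (\<Lambda> \<inter> {a<..<b})" and \<Psi>_pos: "0 < \<Psi> (b - a)"
    and x: "\<bar>Re z - (a + b) / 2\<bar> \<le> (b - a) / 4" and y: "\<bar>Im z\<bar> \<le> (b - a) / 8"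
  shows "norm (F z) \<le> C * exp (- (5/16) * ((b - a) * \<Psi> (b - a)))"
proof -
  define l P d r where "l = b - a" and "P = \<Psi> (b - a)" and "d = 7 * l / 8"
    and "r = (1 + exp 1) * d"
  have l: "0 < l" and "0 < d"
    using ab by (simp_all add: l_def d_def)
  then have d: "0 < d" "d < r"
    unfolding r_def by (simp_all add: distrib_right)
  define Z where "Z = complex_of_real ` (\<Lambda> \<inter> {a<..<b})"
  have card_Z: "card Z = card (\<Lambda> \<inter> {a<..<b})"
    unfolding Z_def by (rule card_image) (simp add: inj_on_def)
  have close: "norm (w - z) \<le> d" if "w \<in> Z" for w
  proof -
    obtain t where "a < t" "t < b" "w = of_real t"
      using \<open>w \<in> Z\<close> by (auto simp: Z_def)
    with norm_of_real_diff_le_near_middle[OF _ _ x y] show ?thesis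
      unfolding d_def l_def by blast
  qed
  define M where "M = C * exp (11/16 * (l * P))"
  have on_circle: "norm (F w) \<le> M" if "norm (w - z) = r" for w
  proof -
    have "\<bar>Im w\<bar> \<le> \<bar>Im z\<bar> + \<bar>Im (w - z)\<bar>"
      by simp
    also have "\<dots> \<le> l / 8 + (1 + exp 1) * (7 * l / 8)"
      using y abs_Im_le_cmod[of "w - z"] that unfolding r_def d_def l_def by linarith
    finally show ?thesis
      unfolding M_def P_def l_def using l \<Psi>_pos by (intro norm_le_in_strip) (auto simp: l_def)
  qed
  have "norm (F z) \<le> M * (d / (r - d)) ^ card Z"
    using fin vanishes close d on_circle unfolding Z_def
    by (intro norm_le_by_zeros_in_disc[OF holomorphic]) auto
  also have "(d / (r - d)) ^ card Z = exp (- real (card Z))"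
    using d by (simp add: r_def field_simps exp_minus power_inverse exp_of_nat_mult[symmetric])
  also have "M * \<dots> \<le> M * exp (- (l * P))"
    using card card_Z C_pos unfolding M_def l_def P_def by simp
  also have "\<dots> = C * exp (- (5/16) * (l * P))"
    unfolding M_def mult.assoc exp_add[symmetric] by (simp add: field_simps)
  finally show ?thesis
    unfolding l_def P_def .
qed

lemma norm_mult_exp_angle_near_interval:
  assumes ab: "a < b" and fin: "finite (\<Lambda> \<inter> {a<..<b})"
    and card: "(b - a) * \<Psi> (b - a) < card (\<Lambda> \<inter> {a<..<b})"
    and near: "\<bar>Re z - (a + b) / 2\<bar> \<le> (b - a) / 4" and z: "0 < Im z" "Im z \<le> (b - a) / 8"
    and F_z: "norm (F z) \<le> C * exp 1"
  shows "norm (F z) * exp ((b - a) * max 0 (\<Psi> (b - a)) / 16 * middle_quarter_angle a b z)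
    \<le> C * exp 1"
proof (cases "0 < \<Psi> (b - a)")
  case False
  with F_z show ?thesis
    by simp
next
  case True
  define L where "L = (b - a) * \<Psi> (b - a)"
  have "0 < L"
    using ab True by (simp add: L_def)
  have "middle_quarter_angle a b z \<le> 4"
    using middle_quarter_angle_bounds(2)[OF z(1) ab] pi_less_4 by linarith
  then have "(b - a) * max 0 (\<Psi> (b - a)) / 16 * middle_quarter_angle a b z \<le> L / 16 * 4"
    using True ab by (simp add: L_def mult_left_mono)
  also have "\<dots> \<le> 5/16 * L + 1"
    using \<open>0 < L\<close> by simp
  finally have angle: "(b - a) * max 0 (\<Psi> (b - a)) / 16 * middle_quarter_angle a b z \<le> 5/16 * L + 1" .
  have "norm (F z) \<le> C * exp (- (5/16) * L)"
    using norm_small_near_dense_zeros[OF ab fin card True near] z unfolding L_def by simp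
  then have "norm (F z) * exp ((b - a) * max 0 (\<Psi> (b - a)) / 16 * middle_quarter_angle a b z)
      \<le> C * exp (- (5/16) * L) * exp (5/16 * L + 1)"
    using angle C_pos by (intro mult_mono) auto
  also have "\<dots> = C * exp 1"
    by (simp add: mult.assoc exp_add[symmetric])
  finally show ?thesis .
qed

end

locale substantial_intervals = vanishing_bernstein_function +
  fixes a b :: "nat \<Rightarrow> real" and K :: "nat set"
  assumes finite_K: "finite K"
    and a_pos: "\<And>k. k \<in> K \<Longrightarrow> 0 < a k"
    and a_less_b: "\<And>k. k \<in> K \<Longrightarrow> a k < b k"
    and disjoint: "\<And>j k. j \<in> K \<Longrightarrow> k \<in> K \<Longrightarrow> j \<noteq> k \<Longrightarrow> b j \<le> a k \<or> b k \<le> a j"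
    and finite_zeros: "\<And>k. k \<in> K \<Longrightarrow> finite (\<Lambda> \<inter> {a k<..<b k})"
    and many_zeros: "\<And>k. k \<in> K \<Longrightarrow> (b k - a k) * \<Psi> (b k - a k) < card (\<Lambda> \<inter> {a k<..<b k})"
begin

definition weight :: "nat \<Rightarrow> real" where
  "weight k = (b k - a k) * max 0 (\<Psi> (b k - a k)) / 16"

lemma weight_nonneg:
  assumes "k \<in> K"
  shows "0 \<le> weight k"
  using a_less_b[OF assms] by (simp add: weight_def)

lemma near_interval_unique:
  assumes "j \<in> K" "k \<in> K"
    and "\<bar>x - (a j + b j) / 2\<bar> < (b j - a j) / 4" "\<bar>x - (a k + b k) / 2\<bar> < (b k - a k) / 4"
  shows "j = k"
  using assms disjoint[of j k] a_less_b quarter_far_of_disjoint[of "a j" "b j" "a k" "b k" x]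
  by force

lemma weight_mult_angle_le_far:
  assumes k: "k \<in> K" and z: "0 < Im z" and far: "(b k - a k) / 4 \<le> \<bar>Re z - (a k + b k) / 2\<bar>"
  shows "weight k * middle_quarter_angle (a k) (b k) z \<le> Im z * max 0 (\<Psi> (b k - a k))"
proof -
  have "middle_quarter_angle (a k) (b k) z \<le> 16 * Im z / (b k - a k)"
    using a_less_b[OF k] z far by (rule middle_quarter_angle_le_far)
  then have "weight k * middle_quarter_angle (a k) (b k) z \<le> weight k * (16 * Im z / (b k - a k))"
    using weight_nonneg[OF k] by (rule mult_left_mono)
  also have "\<dots> = Im z * max 0 (\<Psi> (b k - a k))"
    using a_less_b[OF k] by (simp add: weight_def field_simps)
  finally show ?thesis .
qed

(* At most one middle quarter lies below z: its angle is paid for by the smallness of F there,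
   and all other angles are O(Im z). *)
lemma norm_mult_exp_angle_sum_on_line:
  assumes z: "0 < Im z" "Im z \<le> 1" "\<And>k. k \<in> K \<Longrightarrow> Im z \<le> (b k - a k) / 8"
    and small: "Im z * (\<Sum>k\<in>K. max 0 (\<Psi> (b k - a k))) \<le> 1" "Im z * max 0 (\<sigma> 1) \<le> 1"
  shows "norm (F z) * exp (\<Sum>k\<in>K. weight k * middle_quarter_angle (a k) (b k) z) \<le> C * exp 2"
proof -
  define T where "T k = weight k * middle_quarter_angle (a k) (b k) z" for k
  define N where "N = {k \<in> K. \<bar>Re z - (a k + b k) / 2\<bar> < (b k - a k) / 4}"
  have "norm (F z) \<le> C * exp (Im z * max 0 (\<sigma> 1))"
    using norm_le_exp_abs_Im[of z 1] z by simp
  also have "\<dots> \<le> C * exp 1"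
    using small C_pos by simp
  finally have F_z: "norm (F z) \<le> C * exp 1" .
  have near: "norm (F z) * exp (\<Sum>k\<in>N. T k) \<le> C * exp 1"
  proof (cases "N = {}")
    case False
    then obtain k where k: "k \<in> N"
      by blast
    then have "N = {k}"
      using near_interval_unique unfolding N_def by blast
    have k: "k \<in> K" "\<bar>Re z - (a k + b k) / 2\<bar> < (b k - a k) / 4"
      using k by (simp_all add: N_def)
    have "norm (F z) * exp (T k) \<le> C * exp 1"
      unfolding T_def weight_def
      by (rule norm_mult_exp_angle_near_interval) (use k z F_z a_less_b finite_zeros many_zeros in auto)
    with \<open>N = {k}\<close> show ?thesis
      by simp
  qed (use F_z in simp)
  have "(\<Sum>k\<in>K - N. T k) \<le> (\<Sum>k\<in>K - N. Im z * max 0 (\<Psi> (b k - a k)))"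
    unfolding T_def N_def using z weight_mult_angle_le_far by (intro sum_mono) auto
  also have "\<dots> \<le> (\<Sum>k\<in>K. Im z * max 0 (\<Psi> (b k - a k)))"
    using finite_K z by (intro sum_mono2) auto
  also have "\<dots> \<le> 1"
    using small by (simp add: sum_distrib_left)
  finally have far: "(\<Sum>k\<in>K - N. T k) \<le> 1" .
  have "(\<Sum>k\<in>K. T k) = (\<Sum>k\<in>N. T k) + (\<Sum>k\<in>K - N. T k)"
    using finite_K by (simp add: N_def sum.subset_diff[of N K])
  then have "norm (F z) * exp (\<Sum>k\<in>K. T k) = norm (F z) * exp (\<Sum>k\<in>N. T k) * exp (\<Sum>k\<in>K - N. T k)"
    by (simp add: exp_add)
  also have "\<dots> \<le> C * exp 1 * exp 1"
    by (rule mult_mono[OF near]) (use far C_pos in auto)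
  finally show ?thesis
    unfolding T_def by (simp add: mult.assoc exp_add[symmetric])
qed

definition majorant :: "real \<Rightarrow> real \<Rightarrow> complex \<Rightarrow> complex" where
  "majorant R c z = of_real c - \<i> * of_real (\<sigma> R) * z + \<i> * (\<Sum>k\<in>K. of_real (weight k) *
     (segment_log (middle_quarter_lower (a k) (b k)) (middle_quarter_upper (a k) (b k)) z -
      segment_log (R\<^sup>2 / middle_quarter_upper (a k) (b k)) (R\<^sup>2 / middle_quarter_lower (a k) (b k)) z))"

lemma Re_majorant:
  "Re (majorant R c z) = c + \<sigma> R * Im z -
     (\<Sum>k\<in>K. weight k * (middle_quarter_angle (a k) (b k) z - inverted_quarter_angle R (a k) (b k) z))"
  unfolding majorant_def middle_quarter_angle_def inverted_quarter_angle_def segment_angle_def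
  by (simp add: Im_sum algebra_simps)

lemma holomorphic_on_majorant:
  assumes "0 < R"
  shows "majorant R c holomorphic_on {z. 0 < Im z}"
proof -
  have "middle_quarter_lower (a k) (b k) < middle_quarter_upper (a k) (b k)"
    and "R\<^sup>2 / middle_quarter_upper (a k) (b k) < R\<^sup>2 / middle_quarter_lower (a k) (b k)"
    if "k \<in> K" for k
    using middle_quarter_bounds[OF a_less_b[OF that]] a_pos[OF that] assms
    by (auto simp: divide_strict_left_mono)
  then show ?thesis
    unfolding majorant_def by (intro holomorphic_intros holomorphic_on_segment_log) auto
qed

lemma norm_le_exp_Re_majorant_on_arc:
  assumes z: "norm z = R" "0 < Im z" and \<sigma>_R: "0 \<le> \<sigma> R"
  shows "norm (F z) \<le> exp (Re (majorant R (ln C + 2) z))"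
proof -
  have "norm (F z) \<le> C * exp (\<bar>Im z\<bar> * max 0 (\<sigma> R))"
    using abs_Im_le_cmod[of z] z by (intro norm_le_exp_abs_Im) auto
  also have "\<dots> = C * exp (\<sigma> R * Im z) * 1"
    using z \<sigma>_R by (simp add: mult.commute)
  also have "\<dots> \<le> C * exp (\<sigma> R * Im z) * exp 2"
    using C_pos by (intro mult_left_mono) auto
  also have "\<dots> = exp (Re (majorant R (ln C + 2) z))"
    using inverted_quarter_angle_on_circle[OF z(2) a_pos a_less_b z(1)] C_pos
    by (simp add: Re_majorant exp_add)
  finally show ?thesis .
qed

lemma norm_le_exp_Re_majorant_on_line:
  assumes R: "0 < R" "0 \<le> \<sigma> R"
    and z: "0 < Im z" "Im z \<le> 1" "\<And>k. k \<in> K \<Longrightarrow> Im z \<le> (b k - a k) / 8"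
    and small: "Im z * (\<Sum>k\<in>K. max 0 (\<Psi> (b k - a k))) \<le> 1" "Im z * max 0 (\<sigma> 1) \<le> 1"
  shows "norm (F z) \<le> exp (Re (majorant R (ln C + 2) z))"
proof -
  define A where "A = (\<Sum>k\<in>K. weight k * middle_quarter_angle (a k) (b k) z)"
  have "norm (F z) * exp A \<le> C * exp 2"
    unfolding A_def using z small by (rule norm_mult_exp_angle_sum_on_line)
  then have "norm (F z) \<le> exp (ln C + 2 - A)"
    using C_pos by (simp add: exp_diff exp_add pos_le_divide_eq)
  also have "\<dots> \<le> exp (Re (majorant R (ln C + 2) z))"
  proof -
    have "0 \<le> (\<Sum>k\<in>K. weight k * inverted_quarter_angle R (a k) (b k) z)"
      using weight_nonneg inverted_quarter_angle_nonneg z(1) a_pos a_less_b R(1)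
      by (intro sum_nonneg mult_nonneg_nonneg) auto
    moreover have "0 \<le> \<sigma> R * Im z"
      using R z by simp
    ultimately show ?thesis
      unfolding Re_majorant A_def by (simp add: sum_subtractf right_diff_distrib)
  qed
  finally show ?thesis .
qed

lemma obtain_low_line:
  assumes "0 < y"
  obtains \<eta> where "0 < \<eta>" "\<eta> < y" "\<eta> \<le> 1" "\<And>k. k \<in> K \<Longrightarrow> \<eta> \<le> (b k - a k) / 8"
    "\<eta> * (\<Sum>k\<in>K. max 0 (\<Psi> (b k - a k))) \<le> 1" "\<eta> * max 0 (\<sigma> 1) \<le> 1"
proof -
  have "\<forall>\<^sub>F \<eta> in at_right 0. 0 < \<eta> \<and> \<eta> * 1 \<le> y / 2 \<and> \<eta> * 1 \<le> 1 \<and>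
      (\<forall>k\<in>K. \<eta> * 1 \<le> (b k - a k) / 8) \<and>
      \<eta> * (\<Sum>k\<in>K. max 0 (\<Psi> (b k - a k))) \<le> 1 \<and> \<eta> * max 0 (\<sigma> 1) \<le> 1"
    using a_less_b assms finite_K
    by (intro eventually_conj eventually_at_right_less eventually_ball_finite ballI
        eventually_at_right_0_mult_le) auto
  with that show thesis
    using eventually_happens'[of "at_right (0::real)"] assms by force
qed

lemma Re_majorant_imaginary_axis_le:
  assumes y: "0 < y" "\<And>k. k \<in> K \<Longrightarrow> y \<le> a k / 2" and R: "\<And>k. k \<in> K \<Longrightarrow> 2 * b k \<le> R"
  shows "Re (majorant R c (\<i> * of_real y)) \<le>
    c + y * (\<sigma> R - (\<Sum>k\<in>K. \<Psi> (b k - a k) * ((b k - a k) / b k)\<^sup>2) / 256)"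
proof -
  have gain: "y * (\<Psi> (b k - a k) * ((b k - a k) / b k)\<^sup>2 / 256) \<le>
      weight k * (middle_quarter_angle (a k) (b k) (\<i> * of_real y) -
                  inverted_quarter_angle R (a k) (b k) (\<i> * of_real y))" if k: "k \<in> K" for k
  proof -
    have "y * (\<Psi> (b k - a k) * ((b k - a k) / b k)\<^sup>2 / 256) \<le>
        y * (max 0 (\<Psi> (b k - a k)) * ((b k - a k) / b k)\<^sup>2 / 256)"
      using y by (intro mult_left_mono divide_right_mono mult_right_mono) auto
    also have "\<dots> = weight k * ((b k - a k) * y / (16 * (b k)\<^sup>2))"
      by (simp add: weight_def power_divide power2_eq_square mult_ac)
    also have "\<dots> \<le> weight k * (middle_quarter_angle (a k) (b k) (\<i> * of_real y) -
                                  inverted_quarter_angle R (a k) (b k) (\<i> * of_real y))"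
      using a_pos a_less_b y R k weight_nonneg
      by (intro mult_left_mono middle_quarter_angle_gain) auto
    finally show ?thesis .
  qed
  have "y * ((\<Sum>k\<in>K. \<Psi> (b k - a k) * ((b k - a k) / b k)\<^sup>2) / 256) \<le>
      (\<Sum>k\<in>K. weight k * (middle_quarter_angle (a k) (b k) (\<i> * of_real y) -
                          inverted_quarter_angle R (a k) (b k) (\<i> * of_real y)))"
    unfolding sum_divide_distrib sum_distrib_left by (intro sum_mono gain)
  then show ?thesis
    unfolding Re_majorant by (simp add: right_diff_distrib mult.commute)
qed

lemma norm_on_imaginary_axis_le:
  assumes y: "0 < y" "\<And>k. k \<in> K \<Longrightarrow> y \<le> a k / 2"
    and R: "\<And>k. k \<in> K \<Longrightarrow> 2 * b k \<le> R" "y < R" "0 \<le> \<sigma> R"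
  shows "norm (F (\<i> * of_real y)) \<le>
    C * exp 2 * exp (y * (\<sigma> R - (\<Sum>k\<in>K. \<Psi> (b k - a k) * ((b k - a k) / b k)\<^sup>2) / 256))"
proof -
  obtain \<eta> where \<eta>: "0 < \<eta>" "\<eta> < y" "\<eta> \<le> 1" "\<And>k. k \<in> K \<Longrightarrow> \<eta> \<le> (b k - a k) / 8"
    "\<eta> * (\<Sum>k\<in>K. max 0 (\<Psi> (b k - a k))) \<le> 1" "\<eta> * max 0 (\<sigma> 1) \<le> 1"
    using obtain_low_line[OF y(1)] by blast
  define S where "S = ball 0 R \<inter> {z. \<eta> < Im z}"
  have closure_S: "closure S \<subseteq> {z. \<eta> \<le> Im z}"
    unfolding S_def by (intro closure_minimal) (auto intro: closed_halfspace_Im_ge)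
  have "norm (F (\<i> * of_real y)) \<le> exp (Re (majorant R (ln C + 2) (\<i> * of_real y)))"
  proof (rule norm_le_exp_Re_frontier[OF _ holomorphic_on_majorant open_halfspace_Im_gt])
    show "F holomorphic_on {z. 0 < Im z}"
      using holomorphic by (rule holomorphic_on_subset) simp
    show "closure S \<subseteq> {z. 0 < Im z}"
      using closure_S \<eta>(1) by auto
    show "norm (F z) \<le> exp (Re (majorant R (ln C + 2) z))" if "z \<in> frontier S" for z
    proof -
      have "Im z \<ge> \<eta>"
        using that closure_S by (auto simp: frontier_def)
      moreover have "norm z = R \<or> Im z = \<eta>"
        using that frontier_ball_Int_Im_gt_subset unfolding S_def by blast
      ultimately show ?thesis
        using \<eta> R y norm_le_exp_Re_majorant_on_arc[of z]
          norm_le_exp_Re_majorant_on_line[of R z] by force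
    qed
  qed (use y R \<eta> in \<open>auto simp: S_def bounded_Int norm_mult\<close>)
  also have "\<dots> \<le> exp (ln C + 2 + y * (\<sigma> R - (\<Sum>k\<in>K. \<Psi> (b k - a k) * ((b k - a k) / b k)\<^sup>2) / 256))"
    using Re_majorant_imaginary_axis_le[OF y R(1)] by simp
  also have "\<dots> = C * exp 2 * exp (y * (\<sigma> R - (\<Sum>k\<in>K. \<Psi> (b k - a k) * ((b k - a k) / b k)\<^sup>2) / 256))"
    using C_pos by (simp add: exp_add)
  finally show ?thesis .
qed

end

context vanishing_bernstein_function
begin

lemma norm_on_imaginary_axis_le_partial_sum:
  fixes a b :: "nat \<Rightarrow> real"
  assumes a_1: "0 < a 1" and ab: "\<And>k. 1 \<le> k \<Longrightarrow> a k < b k"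
    and ba: "\<And>k. 1 \<le> k \<Longrightarrow> b k < a (Suc k)"
    and fin: "\<And>k. 1 \<le> k \<Longrightarrow> finite (\<Lambda> \<inter> {a k<..<b k})"
    and card: "\<And>k. 1 \<le> k \<Longrightarrow> (b k - a k) * \<Psi> (b k - a k) < card (\<Lambda> \<inter> {a k<..<b k})"
    and y: "0 < y" "y \<le> a 1 / 2" and n: "1 \<le> n" "0 \<le> \<sigma> (2 * b n)"
  shows "norm (F (\<i> * of_real y)) \<le> C * exp 2 *
    exp (y * (\<sigma> (2 * b n) - (\<Sum>k=1..n. \<Psi> (b k - a k) * ((b k - a k) / b k)\<^sup>2) / 256))"
proof -
  have ordered: "b j < a k" if "1 \<le> j" "j < k" for j k
    by (rule intervals_ordered[of a b]) (use ab ba that in auto)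
  have a_ge: "a 1 \<le> a k" if "1 \<le> k" for k
    using ordered[of 1 k] ab[of 1] that by (cases "k = 1") auto
  have b_le: "b k \<le> b n" if "k \<in> {1..n}" for k
    using ordered[of k n] ab[of n] that by (cases "k = n") auto
  interpret substantial_intervals F C \<sigma> \<Psi> \<Lambda> a b "{1..n}"
  proof unfold_locales
    show "b j \<le> a k \<or> b k \<le> a j" if "j \<in> {1..n}" "k \<in> {1..n}" "j \<noteq> k" for j k
      using ordered[of j k] ordered[of k j] that by (cases "j < k") auto
  qed (use a_1 a_ge ab fin card in \<open>auto intro: less_le_trans\<close>)
  show ?thesis
  proof (rule norm_on_imaginary_axis_le)
    show "y \<le> a k / 2" if "k \<in> {1..n}" for k
      using y a_ge[of k] that by simp
    show "y < 2 * b n"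
      using y a_ge[of n] ab[of n] n a_1 by simp
  qed (use y n b_le in auto)
qed

lemma card_zeros_gt_if_substantial:
  assumes "F \<xi> \<noteq> 0" "substantial \<Lambda> a b \<Psi>" "1 \<le> k" "a k < b k"
  shows "(b k - a k) * \<Psi> (b k - a k) < card (\<Lambda> \<inter> {a k<..<b k})"
  using assms finite_zeros_in_interval[OF assms(1), of "a k" "b k"] unfolding substantial_def
  by (auto simp: pos_less_divide_eq mult.commute)

lemma identically_zero:
  fixes a b :: "nat \<Rightarrow> real" and n :: "nat \<Rightarrow> nat"
  assumes a_1: "0 < a 1" and ab: "\<And>k. 1 \<le> k \<Longrightarrow> a k < b k"
    and ba: "\<And>k. 1 \<le> k \<Longrightarrow> b k < a (Suc k)" and a_lim: "filterlim a at_top sequentially"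
    and subst: "substantial \<Lambda> a b \<Psi>" and \<sigma>_lim: "filterlim \<sigma> at_top at_top"
    and n: "filterlim n at_top sequentially"
    and ratio: "filterlim (\<lambda>j. 1 / \<sigma> (2 * b (n j)) *
      (\<Sum>k=1..n j. \<Psi> (b k - a k) * ((b k - a k) / b k)\<^sup>2)) at_top sequentially"
  shows "F \<xi> = 0"
proof (rule ccontr)
  assume "F \<xi> \<noteq> 0"
  note fin = finite_zeros_in_interval[OF this]
  note card = card_zeros_gt_if_substantial[OF \<open>F \<xi> \<noteq> 0\<close> subst _ ab]
  obtain y where y: "0 < y" "y \<le> a 1 / 2" "F (\<i> * of_real y) \<noteq> 0"
    using entire_nonzero_on_imaginary_segment[OF holomorphic \<open>F \<xi> \<noteq> 0\<close>, of "a 1 / 2"] a_1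
    by auto
  have \<sigma>_n: "filterlim (\<lambda>j. \<sigma> (2 * b (n j))) at_top sequentially"
    using a_lim ab n \<sigma>_lim by (rule filterlim_double_upper_endpoint)
  have "((\<lambda>j. C * exp 2 * exp (y * (\<sigma> (2 * b (n j)) -
      (\<Sum>k=1..n j. \<Psi> (b k - a k) * ((b k - a k) / b k)\<^sup>2) / 256))) \<longlongrightarrow> 0) sequentially"
    using \<sigma>_n ratio y by (intro tendsto_zero_exp_diff) auto
  moreover have "\<forall>\<^sub>F j in sequentially. 1 \<le> n j" "\<forall>\<^sub>F j in sequentially. 0 \<le> \<sigma> (2 * b (n j))"
    using n \<sigma>_n unfolding filterlim_at_top by blast+
  then have "\<forall>\<^sub>F j in sequentially. norm (F (\<i> * of_real y)) \<le>
      C * exp 2 * exp (y * (\<sigma> (2 * b (n j)) -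
      (\<Sum>k=1..n j. \<Psi> (b k - a k) * ((b k - a k) / b k)\<^sup>2) / 256))"
    by eventually_elim (rule norm_on_imaginary_axis_le_partial_sum[OF a_1 ab ba fin card y(1,2)])
  ultimately have "norm (F (\<i> * of_real y)) \<le> 0"
    by (intro tendsto_lowerbound[of _ _ sequentially]) auto
  with y show False
    by simp
qed

end

theorem theorem3p3:
  fixes \<Lambda> :: "real set" and a b :: "nat \<Rightarrow> real" and \<Psi> \<sigma> :: "real \<Rightarrow> real"
  assumes \<Lambda>_pos: "\<Lambda> \<subseteq> {0<..}"
    and a1_pos: "0 < a 1"
    and ab: "\<And>k. k \<ge> 1 \<Longrightarrow> a k < b k"
    and ba: "\<And>k. k \<ge> 1 \<Longrightarrow> b k < a (Suc k)"
    and a_lim: "filterlim a at_top sequentially"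
    and \<Psi>_mono: "mono_on {0<..} \<Psi>"
    and \<Psi>_lim: "filterlim \<Psi> at_top at_top"
    and subst: "substantial \<Lambda> a b \<Psi>"
    and \<sigma>_mono: "mono_on {0<..} \<sigma>"
    and \<sigma>_lim: "filterlim \<sigma> at_top at_top"
    and cond_a: "\<And>x. x > 0 \<Longrightarrow> \<sigma> x \<le> 1 / (2 * exp 1) * \<Psi> (x / (2 * exp 1))"
    and cond_b: "\<exists>n :: nat \<Rightarrow> nat. filterlim n at_top sequentially \<and>
        filterlim (\<lambda>j. (1 / \<sigma> (2 * b (n j))) *
           (\<Sum>k=1..n j. \<Psi> (b k - a k) * ((b k - a k) / b k)^2)) at_top sequentially"
  shows "uniqueness_set \<Lambda> \<sigma>"
  unfolding uniqueness_set_def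
proof (intro ballI impI allI)
  fix F z
  assume "F \<in> bernstein_class \<sigma>" and "\<forall>t\<in>\<Lambda>. F (complex_of_real t) = 0"
  then obtain C where "F holomorphic_on UNIV" "0 < C" "\<And>w. norm (F w) \<le> C * exp (\<bar>Im w\<bar> * \<sigma> \<bar>Im w\<bar>)"
    unfolding bernstein_class_def by blast
  then interpret vanishing_bernstein_function F C \<sigma> \<Psi> \<Lambda>
    using \<sigma>_mono \<Psi>_mono cond_a \<open>\<forall>t\<in>\<Lambda>. _\<close> by unfold_locales auto
  obtain n :: "nat \<Rightarrow> nat" where "filterlim n at_top sequentially"
    and "filterlim (\<lambda>j. 1 / \<sigma> (2 * b (n j)) *
      (\<Sum>k=1..n j. \<Psi> (b k - a k) * ((b k - a k) / b k)\<^sup>2)) at_top sequentially"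
    using cond_b by blast
  then show "F z = 0"
    using a1_pos ab ba a_lim subst \<sigma>_lim by (intro identically_zero) auto
qed

end
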